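(* In the protocol with double clipping, fix the graph $G$, a user $v_i$, a value $\tilde d_i>0$ of her noisy degree, and an index $j<i$ with $a_{i,j}=1$ in her clipped neighbor list (so that her clipped list has at most $\tilde d_i$ ones among indices $<i$), and let $\kappa_i\in[\mu^*\tilde d_i,\tilde d_i]$. Then, with probability taken over the first-round randomness, $$\Pr(t_{i,j}>\kappa_i)\le\exp\!\Big[-\tilde d_i\,D\big(\tfrac{\kappa_i}{\tilde d_i}\,\big\|\,\mu\big)\Big]\ \text{(variant F)},\qquad \Pr(t_{i,j}>\kappa_i)\le\exp\!\Big[-\tilde d_i\,D\big(\tfrac{\kappa_i}{\tilde d_i}\,\big\|\,\mu^2\big)\Big]\ \text{(variant O)},$$ $$\Pr(t_{i,j}>\kappa_i)\le\mu\exp\!\Big[-\tilde d_i\,D\big(\tfrac{\max\{\kappa_i,\mu^2\tilde d_i\}}{\tilde d_i}\,\big\|\,\mu^2\big)\Big]\ \text{(variant T)}.$$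
   Context: $D(p_1\|p_2)=p_1\log\frac{p_1}{p_2}+(1-p_1)\log\frac{1-p_1}{1-p_2}$ is the KL divergence between Bernoulli distributions. $ARR_{\epsilon,\mu}:\{0,1\}\to\{0,1\}$ satisfies $\Pr[ARR_{\epsilon,\mu}(1)=1]=\mu$, $\Pr[ARR_{\epsilon,\mu}(0)=1]=\mu e^{-\epsilon}$, with $\mu\in(0,\frac{e^{\epsilon_1}}{e^{\epsilon_1}+1}]$. Round 1: each $v_\ell$ computes $r_{\ell,m}=ARR_{\epsilon_1,\mu}(a_{\ell,m})$ for all $m<\ell$ (all independent, using the original adjacency matrix); $E'=\{\{v_m,v_\ell\}:m<\ell,r_{\ell,m}=1\}$. $\mu^*=\mu,\mu^2,\mu^3$ and $M_i=\{\{v_j,v_k\}\in E':j<k<i\}$, $\{\{v_j,v_k\}\in E':\{v_i,v_k\}\in E',j<k<i\}$, $\{\{v_j,v_k\}\in E':\{v_i,v_j\}\in E',\{v_i,v_k\}\in E',j<k<i\}$ in variants F, O, T respectively. The noisy degree $\tilde d_i$ is computed in round 2 with randomness independent of round 1, and $v_i$'s neighbor list is clipped (by removing ones) so that at most $\tilde d_i$ entries $a_{i,m}$, $m<i$, equal 1. Then $t_{i,j}=|\{k:j<k<i,a_{i,k}=1,\{v_j,v_k\}\in M_i\}|$ with $a_{i,k}$ from the clipped list. *)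

theory Defs
  imports "HOL-Probability.Probability"
begin

definition KLB :: "real \<Rightarrow> real \<Rightarrow> real" where
  "KLB p1 p2 = p1 * ln (p1 / p2) + (1 - p1) * ln ((1 - p1) / (1 - p2))"

definition ARR :: "real \<Rightarrow> real \<Rightarrow> bool \<Rightarrow> bool pmf" where
  "ARR eps mu b = bernoulli_pmf (if b then mu else mu * exp (- eps))"

text \<open>Index set of round-1 reports r_{l,m}, m < l, for vertices 0..n-1.\<close>
definition pairs :: "nat \<Rightarrow> (nat \<times> nat) set" where
  "pairs n = {(l, m). m < l \<and> l < n}"

definition round1 :: "nat \<Rightarrow> real \<Rightarrow> real \<Rightarrow> (nat \<Rightarrow> nat \<Rightarrow> bool) \<Rightarrow> (nat \<times> nat \<Rightarrow> bool) pmf" where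
  "round1 n eps mu A = Pi_pmf (pairs n) False (\<lambda>(l, m). ARR eps mu (A l m))"

text \<open>Membership of the undirected edge {v_x, v_y} in the noisy graph E'.\<close>
definition inE :: "(nat \<times> nat \<Rightarrow> bool) \<Rightarrow> nat \<Rightarrow> nat \<Rightarrow> bool" where
  "inE r x y = (if x < y then r (y, x) else if y < x then r (x, y) else False)"

datatype variant = VF | VO | VT

definition mu_star :: "variant \<Rightarrow> real \<Rightarrow> real" where
  "mu_star v mu = (case v of VF \<Rightarrow> mu | VO \<Rightarrow> mu ^ 2 | VT \<Rightarrow> mu ^ 3)"

definition inM :: "variant \<Rightarrow> (nat \<times> nat \<Rightarrow> bool) \<Rightarrow> nat \<Rightarrow> nat \<Rightarrow> nat \<Rightarrow> bool" where
  "inM v r i j k = (j < k \<and> k < i \<and> inE r j k \<and>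
     (case v of VF \<Rightarrow> True
              | VO \<Rightarrow> inE r i k
              | VT \<Rightarrow> inE r i j \<and> inE r i k))"

text \<open>t_{i,j} with clipped neighbor list c (c k = a_{i,k} after clipping).\<close>
definition tcount :: "variant \<Rightarrow> (nat \<times> nat \<Rightarrow> bool) \<Rightarrow> (nat \<Rightarrow> bool) \<Rightarrow> nat \<Rightarrow> nat \<Rightarrow> nat" where
  "tcount v r c i j = card {k. j < k \<and> k < i \<and> c k \<and> inM v r i j k}"

end

theory Submission
  imports Defs
begin

text \<open>
  Only the clipped neighbours k of v_i with j < k < i (at most dt - 1 of them besides j) can
  contribute to t_{i,j}, and k contributes only if the noisy bit r_{k,j} is set and, in variants
  O and T, also r_{i,k}, which is set with probability mu because a_{i,k} = 1; in variant T the
  bit r_{i,j} must be set as well, again with probability mu. The events for different k read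
  disjoint coordinates of the round-1 randomness, so t_{i,j} is dominated by a sum of
  independent coins of mean at most p = mu (resp. p = mu^2). The exponential Markov inequality
  with the optimal exponent gives the Kullback-Leibler form of the Chernoff bound; if kappa < p dt
  the trivial exponent l = 0 suffices.
\<close>

lemma nn_integral_Pi_pmf_prod_pairs:
  fixes p :: "'i \<Rightarrow> 'a pmf" and H :: "'k \<Rightarrow> 'a \<Rightarrow> 'a \<Rightarrow> ennreal"
  assumes "finite P" "inj_on \<alpha> K" "inj_on \<beta> K" "\<alpha> ` K \<inter> \<beta> ` K = {}" "\<alpha> ` K \<union> \<beta> ` K \<subseteq> P"
  shows "(\<integral>\<^sup>+r. (\<Prod>k\<in>K. H k (r (\<alpha> k)) (r (\<beta> k))) \<partial>Pi_pmf P d p)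
       = (\<Prod>k\<in>K. \<integral>\<^sup>+a. \<integral>\<^sup>+b. H k a b \<partial>p (\<beta> k) \<partial>p (\<alpha> k))"
proof -
  have "finite K"
    using assms(1,2,5) by (meson finite_imageD finite_subset le_sup_iff)
  then show ?thesis
    using assms
  proof (induction K arbitrary: P rule: finite_induct)
    case (insert k K)
    define P' where "P' = P - {\<alpha> k, \<beta> k}"
    have fresh: "\<alpha> k \<notin> \<alpha> ` K \<union> \<beta> ` K" "\<beta> k \<notin> \<alpha> ` K \<union> \<beta> ` K" "\<alpha> k \<noteq> \<beta> k"
      using insert.hyps(2) insert.prems(2-4) by auto
    then have fresh': "\<alpha> k' \<noteq> \<alpha> k" "\<alpha> k' \<noteq> \<beta> k" "\<beta> k' \<noteq> \<alpha> k" "\<beta> k' \<noteq> \<beta> k" if "k' \<in> K" for k'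
      using that by (force simp: image_iff)+
    have IH: "(\<integral>\<^sup>+r. (\<Prod>k\<in>K. H k (r (\<alpha> k)) (r (\<beta> k))) \<partial>Pi_pmf P' d p)
        = (\<Prod>k\<in>K. \<integral>\<^sup>+a. \<integral>\<^sup>+b. H k a b \<partial>p (\<beta> k) \<partial>p (\<alpha> k))"
    proof (rule insert.IH)
      show "\<alpha> ` K \<union> \<beta> ` K \<subseteq> P'"
        using insert.prems(5) fresh unfolding P'_def by blast
    qed (use insert.prems in \<open>auto simp: P'_def\<close>)
    have "Pi_pmf P d p = map_pmf (\<lambda>(a, f). f(\<alpha> k := a))
        (pair_pmf (p (\<alpha> k)) (map_pmf (\<lambda>(b, f). f(\<beta> k := b)) (pair_pmf (p (\<beta> k)) (Pi_pmf P' d p))))"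
    proof -
      have P: "P = insert (\<alpha> k) (insert (\<beta> k) P')"
        using insert.prems(5) unfolding P'_def by auto
      have "finite P'" "\<beta> k \<notin> P'" "\<alpha> k \<notin> insert (\<beta> k) P'"
        using insert.prems(1) fresh(3) by (auto simp: P'_def)
      then show ?thesis
        unfolding P by (simp add: Pi_pmf_insert)
    qed
    moreover have "(\<Prod>k'\<in>insert k K. H k' ((f(\<beta> k := b, \<alpha> k := a)) (\<alpha> k')) ((f(\<beta> k := b, \<alpha> k := a)) (\<beta> k')))
        = H k a b * (\<Prod>k'\<in>K. H k' (f (\<alpha> k')) (f (\<beta> k')))" for f a b
    proof -
      have "(\<Prod>k'\<in>K. H k' ((f(\<beta> k := b, \<alpha> k := a)) (\<alpha> k')) ((f(\<beta> k := b, \<alpha> k := a)) (\<beta> k')))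
          = (\<Prod>k'\<in>K. H k' (f (\<alpha> k')) (f (\<beta> k')))"
        using fresh' by (intro prod.cong) auto
      then show ?thesis
        using insert.hyps fresh(3) by simp
    qed
    ultimately have "(\<integral>\<^sup>+r. (\<Prod>k\<in>insert k K. H k (r (\<alpha> k)) (r (\<beta> k))) \<partial>Pi_pmf P d p)
        = (\<integral>\<^sup>+a. \<integral>\<^sup>+b. \<integral>\<^sup>+f. H k a b * (\<Prod>k'\<in>K. H k' (f (\<alpha> k')) (f (\<beta> k'))) \<partial>Pi_pmf P' d p \<partial>p (\<beta> k) \<partial>p (\<alpha> k))"
      by (simp only: nn_integral_map_pmf nn_integral_pair_pmf' prod.case)
    also have "\<dots> = (\<integral>\<^sup>+a. \<integral>\<^sup>+b. H k a b \<partial>p (\<beta> k) \<partial>p (\<alpha> k)) * (\<Prod>k\<in>K. \<integral>\<^sup>+a. \<integral>\<^sup>+b. H k a b \<partial>p (\<beta> k) \<partial>p (\<alpha> k))"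
      by (simp add: nn_integral_cmult IH nn_integral_multc)
    finally show ?case
      using insert.hyps by simp
  qed simp
qed

lemma nn_integral_Pi_pmf_mult_component:
  assumes "finite P" "\<gamma> \<in> P" and G: "\<And>f x. G (f(\<gamma> := x)) = G f"
  shows "(\<integral>\<^sup>+r. W (r \<gamma>) * G r \<partial>Pi_pmf P d p) = (\<integral>\<^sup>+x. W x \<partial>p \<gamma>) * (\<integral>\<^sup>+r. G r \<partial>Pi_pmf (P - {\<gamma>}) d p)"
proof -
  have "Pi_pmf P d p = map_pmf (\<lambda>(x, f). f(\<gamma> := x)) (pair_pmf (p \<gamma>) (Pi_pmf (P - {\<gamma>}) d p))"
    using assms(1,2) Pi_pmf_insert[of "P - {\<gamma>}" \<gamma> d p] by (simp add: insert_absorb)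
  then show ?thesis
    using G by (simp add: nn_integral_pair_pmf' nn_integral_cmult nn_integral_multc)
qed

lemma nn_integral_pmf_if_le:
  assumes "1 \<le> e" "measure_pmf.prob M A \<le> pp"
  shows "(\<integral>\<^sup>+x. (if x \<in> A then ennreal e else 1) \<partial>measure_pmf M) \<le> ennreal (1 + pp * (e - 1))"
proof -
  have "ennreal e = 1 + ennreal (e - 1)"
    using assms(1) ennreal_plus[of 1 "e - 1"] by simp
  then have "(if x \<in> A then ennreal e else 1) = 1 + ennreal (e - 1) * indicator A x" for x
    by (simp add: indicator_def)
  then have "(\<integral>\<^sup>+x. (if x \<in> A then ennreal e else 1) \<partial>measure_pmf M)
      = ennreal (1 + (e - 1) * measure_pmf.prob M A)"
    using assms(1) by (simp add: nn_integral_add nn_integral_cmult measure_pmf.emeasure_eq_measure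
        ennreal_plus ennreal_mult)
  also have "\<dots> \<le> ennreal (1 + pp * (e - 1))"
    using mult_left_mono[OF assms(2), of "e - 1"] assms(1) by (intro ennreal_leI) (simp add: mult.commute)
  finally show ?thesis .
qed

lemma prod_if_const_eq_power:
  assumes "finite K"
  shows "(\<Prod>k\<in>K. if Q k then e else 1) = e ^ card {k\<in>K. Q k}"
proof -
  have "(\<Prod>k\<in>K. if Q k then e else 1) = (\<Prod>k\<in>K \<inter> {k. Q k}. e) * (\<Prod>k\<in>K \<inter> - {k. Q k}. 1)"
    by (rule prod.If_cases[OF assms])
  then show ?thesis
    by (simp add: Int_def conj_commute)
qed

lemma indicator_count_gt_le_exp:
  fixes l \<kappa> :: real
  assumes "finite K" "0 \<le> l"
  shows "indicator {r. \<kappa> < real (card {k\<in>K. Q r k}) \<and> G r} r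
    \<le> ennreal (exp (- l * \<kappa>)) * (indicator {r. G r} r * (\<Prod>k\<in>K. if Q r k then ennreal (exp l) else 1))"
proof (cases "\<kappa> < real (card {k\<in>K. Q r k}) \<and> G r")
  case True
  have "(\<Prod>k\<in>K. if Q r k then ennreal (exp l) else 1) = ennreal (exp (real (card {k\<in>K. Q r k}) * l))"
    using assms(1) by (simp add: prod_if_const_eq_power ennreal_power exp_of_nat_mult)
  moreover have "l * \<kappa> \<le> l * real (card {k\<in>K. Q r k})"
    using True assms(2) by (intro mult_left_mono) auto
  then have "ennreal 1 \<le> ennreal (exp (- l * \<kappa>)) * ennreal (exp (real (card {k\<in>K. Q r k}) * l))"
    by (simp add: ennreal_leI mult.commute flip: ennreal_mult exp_add)
  ultimately show ?thesis
    using True by simp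
qed simp

lemma nn_integral_Pi_pmf_pair_count_exp_le:
  fixes p :: "'i \<Rightarrow> 'a pmf" and E :: "'k \<Rightarrow> 'a \<Rightarrow> 'a \<Rightarrow> bool" and F :: "'a \<Rightarrow> bool"
  assumes P: "finite P" "\<gamma> \<in> P" "\<alpha> ` K \<union> \<beta> ` K \<subseteq> P"
    and inj: "inj_on \<alpha> K" "inj_on \<beta> K"
    and disj: "\<alpha> ` K \<inter> \<beta> ` K = {}" "\<gamma> \<notin> \<alpha> ` K \<union> \<beta> ` K"
    and pp: "\<And>k. k \<in> K \<Longrightarrow> measure_pmf.prob (pair_pmf (p (\<alpha> k)) (p (\<beta> k))) {(a, b). E k a b} \<le> pp"
    and pp0: "0 \<le> pp" and l: "0 \<le> l"
  shows "(\<integral>\<^sup>+r. indicator {x. F x} (r \<gamma>) * (\<Prod>k\<in>K. if E k (r (\<alpha> k)) (r (\<beta> k)) then ennreal (exp l) else 1)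
           \<partial>Pi_pmf P d p)
       \<le> emeasure (p \<gamma>) {x. F x} * ennreal ((1 + pp * (exp l - 1)) ^ card K)"
proof -
  define H where "H k a b = (if E k a b then ennreal (exp l) else 1)" for k a b
  define c where "c = 1 + pp * (exp l - 1)"
  have "0 \<le> c"
    using pp0 l by (simp add: c_def)
  have factor: "(\<integral>\<^sup>+a. \<integral>\<^sup>+b. H k a b \<partial>p (\<beta> k) \<partial>p (\<alpha> k)) \<le> ennreal c" if "k \<in> K" for k
  proof -
    have "(\<integral>\<^sup>+a. \<integral>\<^sup>+b. H k a b \<partial>p (\<beta> k) \<partial>p (\<alpha> k))
        = (\<integral>\<^sup>+x. (if x \<in> {(a, b). E k a b} then ennreal (exp l) else 1) \<partial>pair_pmf (p (\<alpha> k)) (p (\<beta> k)))"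
      by (simp add: H_def nn_integral_pair_pmf')
    also have "\<dots> \<le> ennreal c"
      unfolding c_def using pp[OF that] l by (intro nn_integral_pmf_if_le) auto
    finally show ?thesis .
  qed
  have factors: "(\<Prod>k\<in>K. \<integral>\<^sup>+a. \<integral>\<^sup>+b. H k a b \<partial>p (\<beta> k) \<partial>p (\<alpha> k)) \<le> ennreal (c ^ card K)"
    using prod_mono_ennreal[OF factor] \<open>0 \<le> c\<close> by (simp add: ennreal_power)
  have "(\<Prod>k\<in>K. H k ((f(\<gamma> := x)) (\<alpha> k)) ((f(\<gamma> := x)) (\<beta> k))) = (\<Prod>k\<in>K. H k (f (\<alpha> k)) (f (\<beta> k)))" for f x
    using disj(2) by (intro prod.cong) auto
  then have "(\<integral>\<^sup>+r. indicator {x. F x} (r \<gamma>) * (\<Prod>k\<in>K. H k (r (\<alpha> k)) (r (\<beta> k))) \<partial>Pi_pmf P d p)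
      = (\<integral>\<^sup>+x. indicator {x. F x} x \<partial>p \<gamma>) * (\<integral>\<^sup>+r. (\<Prod>k\<in>K. H k (r (\<alpha> k)) (r (\<beta> k))) \<partial>Pi_pmf (P - {\<gamma>}) d p)"
    by (rule nn_integral_Pi_pmf_mult_component[OF P(1,2), where W = "indicator {x. F x}"
        and G = "\<lambda>r. \<Prod>k\<in>K. H k (r (\<alpha> k)) (r (\<beta> k))"])
  also have "(\<integral>\<^sup>+r. (\<Prod>k\<in>K. H k (r (\<alpha> k)) (r (\<beta> k))) \<partial>Pi_pmf (P - {\<gamma>}) d p)
      = (\<Prod>k\<in>K. \<integral>\<^sup>+a. \<integral>\<^sup>+b. H k a b \<partial>p (\<beta> k) \<partial>p (\<alpha> k))"
    using P inj disj by (intro nn_integral_Pi_pmf_prod_pairs) auto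
  also have "(\<integral>\<^sup>+x. indicator {x. F x} x \<partial>p \<gamma>) * \<dots> \<le> emeasure (p \<gamma>) {x. F x} * ennreal (c ^ card K)"
    using factors by (simp add: mult_left_mono)
  finally show ?thesis
    by (simp add: H_def c_def)
qed

lemma prob_Pi_pmf_pair_count_gt_le:
  fixes p :: "'i \<Rightarrow> 'a pmf" and E :: "'k \<Rightarrow> 'a \<Rightarrow> 'a \<Rightarrow> bool" and F :: "'a \<Rightarrow> bool"
  assumes P: "finite P" "\<gamma> \<in> P" "\<alpha> ` K \<union> \<beta> ` K \<subseteq> P"
    and inj: "inj_on \<alpha> K" "inj_on \<beta> K"
    and disj: "\<alpha> ` K \<inter> \<beta> ` K = {}" "\<gamma> \<notin> \<alpha> ` K \<union> \<beta> ` K"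
    and pp: "\<And>k. k \<in> K \<Longrightarrow> measure_pmf.prob (pair_pmf (p (\<alpha> k)) (p (\<beta> k))) {(a, b). E k a b} \<le> pp"
    and pp0: "0 \<le> pp" and l: "0 \<le> l"
  shows "measure_pmf.prob (Pi_pmf P d p) {r. \<kappa> < real (card {k\<in>K. E k (r (\<alpha> k)) (r (\<beta> k))}) \<and> F (r \<gamma>)}
       \<le> measure_pmf.prob (p \<gamma>) {x. F x} * (exp (- l * \<kappa>) * (1 + pp * (exp l - 1)) ^ card K)"
proof -
  have "finite K"
    using P(1,3) inj(1) by (meson finite_imageD finite_subset le_sup_iff)
  define S where "S = {r. \<kappa> < real (card {k\<in>K. E k (r (\<alpha> k)) (r (\<beta> k))}) \<and> F (r \<gamma>)}"
  define X where "X r = indicator {x. F x} (r \<gamma>) * (\<Prod>k\<in>K. if E k (r (\<alpha> k)) (r (\<beta> k)) then ennreal (exp l) else 1)"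
    for r :: "'i \<Rightarrow> 'a"
  have "0 \<le> 1 + pp * (exp l - 1)"
    using pp0 l by simp
  have "emeasure (Pi_pmf P d p) S = (\<integral>\<^sup>+r. indicator S r \<partial>Pi_pmf P d p)"
    by simp
  also have "\<dots> \<le> (\<integral>\<^sup>+r. ennreal (exp (- l * \<kappa>)) * X r \<partial>Pi_pmf P d p)"
    using indicator_count_gt_le_exp[OF \<open>finite K\<close> l, of \<kappa> "\<lambda>r k. E k (r (\<alpha> k)) (r (\<beta> k))" "\<lambda>r. F (r \<gamma>)"]
    by (intro nn_integral_mono) (simp add: S_def X_def indicator_def)
  also have "\<dots> = ennreal (exp (- l * \<kappa>)) * (\<integral>\<^sup>+r. X r \<partial>Pi_pmf P d p)"
    by (rule nn_integral_cmult) simp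
  also have "\<dots> \<le> ennreal (exp (- l * \<kappa>)) * (emeasure (p \<gamma>) {x. F x} * ennreal ((1 + pp * (exp l - 1)) ^ card K))"
    unfolding X_def using assms by (intro mult_left_mono nn_integral_Pi_pmf_pair_count_exp_le) auto
  finally have "ennreal (measure_pmf.prob (Pi_pmf P d p) S)
      \<le> ennreal (exp (- l * \<kappa>) * (measure_pmf.prob (p \<gamma>) {x. F x} * (1 + pp * (exp l - 1)) ^ card K))"
    using \<open>0 \<le> 1 + pp * (exp l - 1)\<close> by (simp add: measure_pmf.emeasure_eq_measure ennreal_mult)
  then show ?thesis
    using \<open>0 \<le> 1 + pp * (exp l - 1)\<close> by (simp add: S_def mult_ac)
qed

lemma Chernoff_exponent_le_exp_KLB:
  fixes pp dt \<kappa> :: real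
  assumes pp: "0 < pp" "pp < 1" and "0 < dt" and \<kappa>: "pp * dt \<le> \<kappa>" "\<kappa> < dt" and m: "real m \<le> dt"
  shows "\<exists>l\<ge>0. exp (- l * \<kappa>) * (1 + pp * (exp l - 1)) ^ m \<le> exp (- dt * KLB (\<kappa> / dt) pp)"
proof -
  define q where "q = \<kappa> / dt"
  have q: "pp \<le> q" "q < 1" and \<kappa>_eq: "\<kappa> = q * dt"
    using \<open>0 < dt\<close> \<kappa> by (auto simp: q_def field_simps)
  \<comment> \<open>the minimiser of \<open>l \<mapsto> -l q + ln (1 + pp (e\<^sup>l - 1))\<close>\<close>
  define l where "l = ln (q * (1 - pp) / (pp * (1 - q)))"
  define B where "B = (1 - pp) / (1 - q)"
  have "pp * (1 - q) \<le> q * (1 - pp)"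
    using q by (simp add: algebra_simps)
  then have l: "0 \<le> l" and exp_l: "exp l = q * (1 - pp) / (pp * (1 - q))"
    using pp q by (simp_all add: l_def)
  have B: "1 + pp * (exp l - 1) = B" and "1 \<le> B"
    using pp q by (simp_all add: exp_l B_def field_simps)
  have "B ^ m = B powr real m"
    using \<open>1 \<le> B\<close> by (simp add: powr_realpow)
  also have "\<dots> \<le> B powr dt"
    using \<open>1 \<le> B\<close> m by (intro powr_mono) auto
  finally have "B ^ m \<le> exp (dt * ln B)"
    using \<open>1 \<le> B\<close> by (simp add: powr_def)
  moreover have "- l * \<kappa> + dt * ln B = - dt * KLB q pp"
  proof -
    have "l = ln q + ln (1 - pp) - ln pp - ln (1 - q)" and "ln B = ln (1 - pp) - ln (1 - q)"
      and "KLB q pp = q * (ln q - ln pp) + (1 - q) * (ln (1 - q) - ln (1 - pp))"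
      using pp q by (simp_all add: l_def B_def KLB_def ln_div ln_mult)
    then show ?thesis
      unfolding \<kappa>_eq by (simp only:) (simp add: algebra_simps)
  qed
  ultimately have "exp (- l * \<kappa>) * B ^ m \<le> exp (- dt * KLB q pp)"
    by (metis exp_add exp_gt_zero mult_left_mono less_imp_le)
  then show ?thesis
    using l B by (auto simp: q_def)
qed

lemma le_exp_KLB_if_Chernoff:
  fixes pp dt \<kappa> C x :: real
  assumes pp: "0 < pp" "pp < 1" and "0 < dt" "\<kappa> < dt" "real m \<le> dt" "0 \<le> C"
    and Chernoff: "\<And>l. 0 \<le> l \<Longrightarrow> x \<le> C * (exp (- l * \<kappa>) * (1 + pp * (exp l - 1)) ^ m)"
  shows "x \<le> C * exp (- dt * KLB (max \<kappa> (pp * dt) / dt) pp)"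
proof (cases "pp * dt \<le> \<kappa>")
  case True
  with assms obtain l where "0 \<le> l" "exp (- l * \<kappa>) * (1 + pp * (exp l - 1)) ^ m \<le> exp (- dt * KLB (\<kappa> / dt) pp)"
    using Chernoff_exponent_le_exp_KLB by blast
  with True show ?thesis
    using Chernoff[of l] \<open>0 \<le> C\<close> by (smt (verit) max_def mult_left_mono)
next
  case False
  then have "KLB (max \<kappa> (pp * dt) / dt) pp = 0"
    using pp \<open>0 < dt\<close> by (simp add: max_def KLB_def)
  then show ?thesis
    using Chernoff[of 0] by simp
qed

lemma measure_ARR_True:
  assumes "0 \<le> eps" "0 \<le> mu" "mu \<le> 1"
  shows "measure_pmf.prob (ARR eps mu b) {True} = (if b then mu else mu * exp (- eps))"
proof -
  have "mu * exp (- eps) \<le> 1"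
    using assms by (intro mult_le_one) auto
  then show ?thesis
    using assms by (simp add: ARR_def measure_pmf_single)
qed

lemma measure_pair_ARR_le:
  assumes "0 \<le> eps" "0 \<le> mu" "mu \<le> 1"
  shows "measure_pmf.prob (pair_pmf (ARR eps mu b) (ARR eps mu True)) {(x, y). x \<and> (two \<longrightarrow> y)}
    \<le> (if two then mu ^ 2 else mu)"
proof -
  have "{(x, y). x \<and> (two \<longrightarrow> y)} = {True} \<times> (if two then {True} else UNIV)"
    by auto
  then have "measure_pmf.prob (pair_pmf (ARR eps mu b) (ARR eps mu True)) {(x, y). x \<and> (two \<longrightarrow> y)}
      = measure_pmf.prob (ARR eps mu b) {True} * (if two then mu else 1)"
    using assms by (simp add: measure_pmf_prob_product measure_ARR_True)
  also have "\<dots> \<le> mu * (if two then mu else 1)"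
    using assms by (intro mult_right_mono) (auto simp: measure_ARR_True mult_left_le)
  finally show ?thesis
    by (cases two) (simp_all add: power2_eq_square)
qed

lemma tcount_le_card: "tcount v r c i j \<le> card {k. j < k \<and> k < i \<and> c k}"
  unfolding tcount_def by (intro card_mono) auto

lemma tcount_gt_iff:
  assumes "j < i" "0 \<le> \<kappa>"
  shows "\<kappa> < real (tcount v r c i j) \<longleftrightarrow>
    \<kappa> < real (card {k\<in>{k. j < k \<and> k < i \<and> c k}. r (k, j) \<and> (v \<noteq> VF \<longrightarrow> r (i, k))}) \<and> (v = VT \<longrightarrow> r (i, j))"
proof -
  have "tcount v r c i j = (if v = VT \<and> \<not> r (i, j) then 0
      else card {k\<in>{k. j < k \<and> k < i \<and> c k}. r (k, j) \<and> (v \<noteq> VF \<longrightarrow> r (i, k))})"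
    using assms(1) unfolding tcount_def inM_def inE_def by (cases v) (auto intro: arg_cong[where f = card])
  then show ?thesis
    using assms(2) by auto
qed

lemma prob_tcount_gt_le:
  assumes "0 \<le> eps" "0 < mu" "mu \<le> 1" "i < n" "j < i"
    and clip_sub: "\<And>k. k < i \<Longrightarrow> c k \<Longrightarrow> A i k" and "c j" and "0 \<le> \<kappa>" "0 \<le> l"
  shows "measure_pmf.prob (round1 n eps mu A) {r. \<kappa> < real (tcount v r c i j)}
    \<le> (if v = VT then mu else 1) *
       (exp (- l * \<kappa>) * (1 + (if v = VF then mu else mu ^ 2) * (exp l - 1)) ^ card {k. j < k \<and> k < i \<and> c k})"
proof -
  define K where "K = {k. j < k \<and> k < i \<and> c k}"
  define p where "p = (\<lambda>(l, m). ARR eps mu (A l m))"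
  have "measure_pmf.prob (Pi_pmf (pairs n) False p)
      {r. \<kappa> < real (card {k\<in>K. r (k, j) \<and> (v \<noteq> VF \<longrightarrow> r (i, k))}) \<and> (v = VT \<longrightarrow> r (i, j))}
    \<le> measure_pmf.prob (p (i, j)) {x. v = VT \<longrightarrow> x} *
       (exp (- l * \<kappa>) * (1 + (if v = VF then mu else mu ^ 2) * (exp l - 1)) ^ card K)"
  proof (rule prob_Pi_pmf_pair_count_gt_le)
    show "finite (pairs n)"
      by (rule finite_subset[of _ "{..<n} \<times> {..<n}"]) (auto simp: pairs_def)
    show "inj_on (\<lambda>k. (k, j)) K" "inj_on (\<lambda>k. (i, k)) K"
      by (auto intro: inj_onI)
    show "(i, j) \<in> pairs n" "(\<lambda>k. (k, j)) ` K \<union> (\<lambda>k. (i, k)) ` K \<subseteq> pairs n"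
      "(\<lambda>k. (k, j)) ` K \<inter> (\<lambda>k. (i, k)) ` K = {}" "(i, j) \<notin> (\<lambda>k. (k, j)) ` K \<union> (\<lambda>k. (i, k)) ` K"
      using assms(4,5) by (auto simp: K_def pairs_def)
    show "0 \<le> (if v = VF then mu else mu ^ 2)" "0 \<le> l"
      using assms by auto
  next
    fix k assume "k \<in> K"
    then have "A i k"
      using clip_sub by (simp add: K_def)
    then show "measure_pmf.prob (pair_pmf (p (k, j)) (p (i, k))) {(a, b). a \<and> (v \<noteq> VF \<longrightarrow> b)}
        \<le> (if v = VF then mu else mu ^ 2)"
      using measure_pair_ARR_le[of eps mu "A k j" "v \<noteq> VF"] assms(1-3)
      by (cases "v = VF") (simp_all add: p_def)
  qed
  moreover have "{x. v = VT \<longrightarrow> x} = (if v = VT then {True} else UNIV)"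
    by auto
  then have "measure_pmf.prob (p (i, j)) {x. v = VT \<longrightarrow> x} = (if v = VT then mu else 1)"
    using clip_sub[OF \<open>j < i\<close> \<open>c j\<close>] assms(1-3) by (simp add: p_def measure_ARR_True)
  ultimately show ?thesis
    using assms(5,8) unfolding round1_def p_def K_def by (simp add: tcount_gt_iff)
qed

lemma prob_tcount_gt_le_exp_KLB:
  fixes v :: variant
  assumes "0 \<le> eps" "0 < mu" "mu < 1" "i < n" "j < i"
    and clip_sub: "\<And>k. k < i \<Longrightarrow> c k \<Longrightarrow> A i k"
    and clip_card: "real (card {k. k < i \<and> c k}) \<le> dt" and "c j"
    and \<kappa>: "0 < \<kappa>" "\<kappa> \<le> dt"
  defines "pp \<equiv> if v = VF then mu else mu ^ 2"
  shows "measure_pmf.prob (round1 n eps mu A) {r. \<kappa> < real (tcount v r c i j)}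
    \<le> (if v = VT then mu else 1) * exp (- dt * KLB (max \<kappa> (pp * dt) / dt) pp)"
proof -
  define K where "K = {k. j < k \<and> k < i \<and> c k}"
  have "card (insert j K) \<le> card {k. k < i \<and> c k}"
    using \<open>j < i\<close> \<open>c j\<close> by (intro card_mono) (auto simp: K_def)
  then have card_K: "real (card K) + 1 \<le> dt"
    using clip_card finite_subset[of K "{..<i}"] by (simp add: K_def)
  show ?thesis
  proof (cases "\<kappa> = dt")
    case True
    have "real (tcount v r c i j) \<le> real (card K)" for r
      unfolding K_def by (simp add: tcount_le_card)
    then have "{r. \<kappa> < real (tcount v r c i j)} = {}"
      using card_K True by (smt (verit) empty_Collect_eq)
    then show ?thesis
      using \<open>0 < mu\<close> by simp
  next
    case False
    have "0 < pp" "pp < 1"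
      using \<open>0 < mu\<close> \<open>mu < 1\<close> by (simp_all add: pp_def power_less_one_iff)
    moreover have "measure_pmf.prob (round1 n eps mu A) {r. \<kappa> < real (tcount v r c i j)}
        \<le> (if v = VT then mu else 1) * (exp (- l * \<kappa>) * (1 + pp * (exp l - 1)) ^ card K)" if "0 \<le> l" for l
      using prob_tcount_gt_le[of eps mu i n j c A \<kappa> l v] assms(1-5) clip_sub \<open>c j\<close> \<kappa>(1) that
      unfolding pp_def K_def by simp
    ultimately show ?thesis
      using False \<kappa> card_K \<open>0 < mu\<close> by (intro le_exp_KLB_if_Chernoff[where m = "card K"]) auto
  qed
qed

theorem theorem5p2:
  fixes n i j :: nat and A :: "nat \<Rightarrow> nat \<Rightarrow> bool" and c :: "nat \<Rightarrow> bool"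
    and eps mu dt kappa :: real and v :: variant
  assumes sym: "\<And>x y. A x y = A y x"
    and irrefl: "\<And>x. \<not> A x x"
    and eps: "eps > 0"
    and mu: "0 < mu" "mu \<le> exp eps / (exp eps + 1)"
    and i: "i < n" and j: "j < i"
    and dt: "dt > 0"
    and clip_sub: "\<And>k. k < i \<Longrightarrow> c k \<Longrightarrow> A i k"
    and clip_card: "real (card {k. k < i \<and> c k}) \<le> dt"
    and cj: "c j"
    and kappa: "mu_star v mu * dt \<le> kappa" "kappa \<le> dt"
  shows "measure_pmf.prob (round1 n eps mu A) {r. real (tcount v r c i j) > kappa}
         \<le> (case v of
               VF \<Rightarrow> exp (- dt * KLB (kappa / dt) mu)
             | VO \<Rightarrow> exp (- dt * KLB (kappa / dt) (mu ^ 2))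
             | VT \<Rightarrow> mu * exp (- dt * KLB (max kappa (mu ^ 2 * dt) / dt) (mu ^ 2)))"
proof -
  have "mu < 1"
    using mu(2) by (smt (verit) exp_gt_zero divide_less_eq_1_pos)
  have "0 < mu_star v mu"
    using mu(1) by (cases v) (simp_all add: mu_star_def)
  then have "0 < kappa"
    using kappa(1) dt by (smt (verit) mult_pos_pos)
  then have "measure_pmf.prob (round1 n eps mu A) {r. real (tcount v r c i j) > kappa}
    \<le> (if v = VT then mu else 1) * exp (- dt * KLB (max kappa ((if v = VF then mu else mu ^ 2) * dt) / dt)
         (if v = VF then mu else mu ^ 2))"
    using eps mu(1) \<open>mu < 1\<close> i j clip_sub clip_card cj kappa(2) by (intro prob_tcount_gt_le_exp_KLB) auto
  moreover have "v \<noteq> VT \<Longrightarrow> max kappa ((if v = VF then mu else mu ^ 2) * dt) = kappa"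
    using kappa(1) by (cases v) (auto simp: mu_star_def)
  ultimately show ?thesis
    by (cases v) auto
qed

end
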